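(* Let $L_k>0$, $V_k^{\mathrm d}>0$, $R_k>0$, $t_k>0$, $V_k^{\mathrm c}>0$ and $\beta\in(0,1)$. For $\lambda_k\in[0,1]$ define \[ D_{\mathrm{comp}}^{\mathrm d}=\frac{\lambda_kL_k}{V_k^{\mathrm d}},\quad D_{\mathrm{tran}}^{\mathrm d}=\frac{\beta\lambda_kL_k}{t_kR_k},\quad D_{\mathrm{tran}}^{\mathrm c}=\frac{(1-\lambda_k)L_k}{t_kR_k},\quad D_{\mathrm{comp}}^{\mathrm c}=\frac{(1-\lambda_k)L_k}{V_k^{\mathrm c}}, \] and \[ D_k(\lambda_k)=\begin{cases}\max\{D_{\mathrm{comp}}^{\mathrm d}+D_{\mathrm{tran}}^{\mathrm d},\ D_{\mathrm{tran}}^{\mathrm c}+D_{\mathrm{comp}}^{\mathrm c}\}, & \text{if } D_{\mathrm{comp}}^{\mathrm d}\ge D_{\mathrm{tran}}^{\mathrm c},\\ D_{\mathrm{tran}}^{\mathrm c}+\max\{D_{\mathrm{tran}}^{\mathrm d},\ D_{\mathrm{comp}}^{\mathrm c}\}, & \text{if } D_{\mathrm{comp}}^{\mathrm d}< D_{\mathrm{tran}}^{\mathrm c}.\end{cases} \] Then a minimizer $\lambda_k^*$ of $D_k(\lambda_k)$ over $\lambda_k\in[0,1]$ is \[ \lambda_k^*=\begin{cases}\dfrac{V_k^{\mathrm d}(t_kR_k+V_k^{\mathrm c})}{V_k^{\mathrm d}V_k^{\mathrm c}(1+\beta)+t_kR_k(V_k^{\mathrm d}+V_k^{\mathrm c})},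 & \text{if } t_kR_k\ge\sqrt{\beta V_k^{\mathrm d}V_k^{\mathrm c}},\\[2ex] \dfrac{V_k^{\mathrm d}}{V_k^{\mathrm d}+t_kR_k}, & \text{if } t_kR_k<\sqrt{\beta V_k^{\mathrm d}V_k^{\mathrm c}}.\end{cases} \]
   Context: Partial compression offloading model: device $k$ compresses a fraction $\lambda_k$ of its $L_k$ raw bits locally at speed $V_k^{\mathrm d}$ and transmits the compressed $\beta\lambda_kL_k$ bits; the remaining $(1-\lambda_k)L_k$ raw bits are transmitted (average rate $t_kR_k$, where $t_k$ is the TDMA time fraction and $R_k$ the average channel rate) and compressed at the edge cloud with allocated speed $V_k^{\mathrm c}$; $\beta$ is the compression ratio. The channel carries only one of the two transmissions at a time, which gives the end-to-end delay $D_k(\lambda_k)$ above. *)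

theory Defs
  imports Complex_Main
begin

text \<open>Parameters: L (raw bits), Vd (device compression speed), t (TDMA fraction),
  R (average rate), Vc (edge compression speed), beta (compression ratio),
  lam (fraction compressed locally).\<close>

definition delay :: "real \<Rightarrow> real \<Rightarrow> real \<Rightarrow> real \<Rightarrow> real \<Rightarrow> real \<Rightarrow> real \<Rightarrow> real" where
  "delay L Vd t R Vc beta lam =
    (let Dcd = lam * L / Vd;
         Dtd = beta * lam * L / (t * R);
         Dtc = (1 - lam) * L / (t * R);
         Dcc = (1 - lam) * L / Vc
     in if Dcd \<ge> Dtc then max (Dcd + Dtd) (Dtc + Dcc)
        else Dtc + max Dtd Dcc)"

definition lam_opt :: "real \<Rightarrow> real \<Rightarrow> real \<Rightarrow> real \<Rightarrow> real \<Rightarrow> real" where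
  "lam_opt Vd t R Vc beta =
    (if t * R \<ge> sqrt (beta * Vd * Vc)
     then Vd * (t * R + Vc) / (Vd * Vc * (1 + beta) + t * R * (Vd + Vc))
     else Vd / (Vd + t * R))"

end

theory Submission
  imports Defs
begin

text \<open>With the per-bit times \<open>A = L/V\<^sup>d\<close>, \<open>B = \<beta>L/(tR)\<close>, \<open>C = L/(tR)\<close>, \<open>D = L/V\<^sup>c\<close>
  the delay is piecewise linear in the local fraction \<open>l\<close>. The device path costs \<open>l (A + B)\<close>
  and grows with \<open>l\<close>; the edge path costs \<open>(1 - l) (C + D)\<close> and shrinks with \<open>l\<close>. When
  transmission is fast (\<open>B C \<le> A D\<close>, i.e. \<open>(t R)\<^sup>2 \<ge> \<beta> V\<^sup>d V\<^sup>c\<close>) the optimum equalises the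
  two paths. Otherwise the channel is the bottleneck and the optimum makes local compression end
  exactly when the raw transmission ends: above that point the device path dominates, below it the
  delay is \<open>(1 - l) C + l B\<close>, which decreases in \<open>l\<close> because compressed bits are cheaper to
  send (\<open>B \<le> C\<close>). Both arguments give the minimum over all real \<open>l\<close>, not only over \<open>[0, 1]\<close>.\<close>

definition split_delay :: "real \<Rightarrow> real \<Rightarrow> real \<Rightarrow> real \<Rightarrow> real \<Rightarrow> real" where
  "split_delay A B C D l =
    (if (1 - l) * C \<le> l * A then max (l * (A + B)) ((1 - l) * (C + D))
     else (1 - l) * C + max (l * B) ((1 - l) * D))"

lemma delay_eq_split_delay:
  "delay L Vd t R Vc beta l =
     split_delay (L / Vd) (beta * L / (t * R)) (L / (t * R)) (L / Vc) l"
  by (simp add: delay_def split_delay_def Let_def algebra_simps)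

lemma split_delay_ge_edge: "(1 - l) * (C + D) \<le> split_delay A B C D l"
  by (auto simp: split_delay_def algebra_simps)

lemma split_delay_ge_pipeline: "(1 - l) * C + l * B \<le> split_delay A B C D l"
  by (auto simp: split_delay_def algebra_simps)

lemma split_delay_ge_device:
  "(1 - l) * C \<le> l * A \<Longrightarrow> l * (A + B) \<le> split_delay A B C D l"
  by (simp add: split_delay_def)

lemma local_dominates_mono:
  fixes A C x l :: real
  assumes "(1 - x) * C \<le> x * A" "x \<le> l" "0 \<le> A + C"
  shows "(1 - l) * C \<le> l * A"
proof -
  have "x * (A + C) \<le> l * (A + C)" using assms(2,3) by (rule mult_right_mono)
  then show ?thesis using assms(1) by (simp add: algebra_simps)
qed

lemma split_delay_min_balanced:
  fixes A B C D :: real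
  assumes pos: "A > 0" "B > 0" "C > 0" "D > 0" and fast: "B * C \<le> A * D"
  defines "x \<equiv> (C + D) / (A + B + C + D)"
  shows "x \<in> {0..1}" and "split_delay A B C D x \<le> split_delay A B C D l"
proof -
  have x_eq: "x * (A + B + C + D) = C + D" using pos by (simp add: x_def)
  show "x \<in> {0..1}" using pos by (simp add: x_def divide_le_eq)
  have balanced: "x * (A + B) = (1 - x) * (C + D)" using x_eq by (simp add: algebra_simps)
  have "(x * (A + C) - C) * (A + B + C + D) = x * (A + B + C + D) * (A + C) - C * (A + B + C + D)"
    by (simp add: algebra_simps)
  also have "\<dots> = A * D - B * C" unfolding x_eq by (simp add: algebra_simps)
  finally have "0 \<le> (x * (A + C) - C) * (A + B + C + D)" using fast by simp
  then have "0 \<le> x * (A + C) - C" using pos by (simp add: zero_le_mult_iff)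
  then have local_x: "(1 - x) * C \<le> x * A" by (simp add: algebra_simps)
  have value_x: "split_delay A B C D x = x * (A + B)"
    using local_x balanced by (simp add: split_delay_def)
  show "split_delay A B C D x \<le> split_delay A B C D l"
  proof (cases "x \<le> l")
    case True
    have "x * (A + B) \<le> l * (A + B)" using True pos by (simp add: mult_right_mono)
    also have "\<dots> \<le> split_delay A B C D l"
      using local_dominates_mono[OF local_x True] pos by (simp add: split_delay_ge_device)
    finally show ?thesis using value_x by simp
  next
    case False
    have "(1 - x) * (C + D) \<le> (1 - l) * (C + D)" using False pos by (simp add: mult_right_mono)
    also have "\<dots> \<le> split_delay A B C D l" by (rule split_delay_ge_edge)
    finally show ?thesis using value_x balanced by simp
  qed
qed

lemma split_delay_min_channel_bound:
  fixes A B C D :: real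
  assumes pos: "A > 0" "B > 0" "C > 0" "D > 0" and "B \<le> C" and slow: "A * D < B * C"
  defines "x \<equiv> C / (A + C)"
  shows "x \<in> {0..1}" and "split_delay A B C D x \<le> split_delay A B C D l"
proof -
  have x_eq: "x * (A + C) = C" using pos by (simp add: x_def)
  show "x \<in> {0..1}" using pos by (simp add: x_def divide_le_eq)
  have synchronised: "(1 - x) * C = x * A" using x_eq by (simp add: algebra_simps)
  have "(x * (B + D) - D) * (A + C) = x * (A + C) * (B + D) - D * (A + C)"
    by (simp add: algebra_simps)
  also have "\<dots> = B * C - A * D" unfolding x_eq by (simp add: algebra_simps)
  finally have "0 \<le> (x * (B + D) - D) * (A + C)" using slow by simp
  then have "0 \<le> x * (B + D) - D" using pos by (simp add: zero_le_mult_iff)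
  then have "(1 - x) * D \<le> x * B" by (simp add: algebra_simps)
  then have value_x: "split_delay A B C D x = (1 - x) * C + x * B"
    using synchronised by (simp add: split_delay_def algebra_simps)
  show "split_delay A B C D x \<le> split_delay A B C D l"
  proof (cases "x \<le> l")
    case True
    have "(1 - x) * C + x * B = x * (A + B)" using synchronised by (simp add: algebra_simps)
    also have "\<dots> \<le> l * (A + B)" using True pos by (simp add: mult_right_mono)
    also have "\<dots> \<le> split_delay A B C D l"
      using local_dominates_mono[OF eq_refl[OF synchronised] True] pos
      by (simp add: split_delay_ge_device)
    finally show ?thesis using value_x by simp
  next
    case False
    have "0 \<le> (x - l) * (C - B)" using False \<open>B \<le> C\<close> by simp
    then have "(1 - x) * C + x * B \<le> (1 - l) * C + l * B" by (simp add: algebra_simps)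
    also have "\<dots> \<le> split_delay A B C D l" by (rule split_delay_ge_pipeline)
    finally show ?thesis using value_x by simp
  qed
qed

lemma lam_opt_eq:
  fixes L Vd R t Vc beta :: real
  assumes "L > 0" "Vd > 0" "t > 0" "R > 0" "Vc > 0" "beta > 0"
  defines "A \<equiv> L / Vd" and "B \<equiv> beta * L / (t * R)" and "C \<equiv> L / (t * R)" and "D \<equiv> L / Vc"
  shows "lam_opt Vd t R Vc beta =
           (if B * C \<le> A * D then (C + D) / (A + B + C + D) else C / (A + C))"
proof -
  have "(sqrt (beta * Vd * Vc) \<le> t * R) = (beta * Vd * Vc \<le> (t * R)\<^sup>2)"
    using assms(3,4) real_le_lsqrt[of "t * R"] sqrt_le_D by force
  also have "\<dots> = (B * C \<le> A * D)"
  proof -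
    define k where "k = L\<^sup>2 / (Vd * Vc * (t * R)\<^sup>2)"
    have "k > 0" unfolding k_def using assms by (intro divide_pos_pos mult_pos_pos) simp_all
    moreover have "B * C = (beta * Vd * Vc) * k" and "A * D = (t * R)\<^sup>2 * k"
      using assms by (simp_all add: k_def A_def B_def C_def D_def field_simps power2_eq_square)
    ultimately show ?thesis by (simp add: mult.assoc)
  qed
  finally have regime: "(sqrt (beta * Vd * Vc) \<le> t * R) = (B * C \<le> A * D)" .
  define k where "k = L / (Vd * Vc * (t * R))"
  have "k > 0" unfolding k_def using assms by (intro divide_pos_pos mult_pos_pos) simp_all
  have "C + D = k * (Vd * (t * R + Vc))"
    and "A + B + C + D = k * (Vd * Vc * (1 + beta) + t * R * (Vd + Vc))"
    and "C = (k * Vc) * Vd" and "A + C = (k * Vc) * (Vd + t * R)"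
    using assms by (simp_all add: k_def A_def B_def C_def D_def field_simps)
  then have "(C + D) / (A + B + C + D)
               = Vd * (t * R + Vc) / (Vd * Vc * (1 + beta) + t * R * (Vd + Vc))"
    and "C / (A + C) = Vd / (Vd + t * R)"
    using \<open>k > 0\<close> assms(5) by simp_all
  then show ?thesis by (simp add: lam_opt_def regime)
qed

theorem lemma1:
  fixes L Vd R t Vc beta :: real
  assumes "L > 0" and "Vd > 0" and "R > 0" and "t > 0" and "Vc > 0"
    and "0 < beta" and "beta < 1"
  shows "lam_opt Vd t R Vc beta \<in> {0..1} \<and>
         (\<forall>lam \<in> {0..1}. delay L Vd t R Vc beta (lam_opt Vd t R Vc beta)
                          \<le> delay L Vd t R Vc beta lam)"
proof -
  define A B C D where "A = L / Vd" and "B = beta * L / (t * R)"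
    and "C = L / (t * R)" and "D = L / Vc"
  have tR: "t * R > 0" using assms by simp
  have pos: "A > 0" "B > 0" "C > 0" "D > 0"
    using assms tR by (simp_all add: A_def B_def C_def D_def)
  have "B \<le> C" using assms tR by (simp add: B_def C_def divide_right_mono)
  have opt: "lam_opt Vd t R Vc beta =
               (if B * C \<le> A * D then (C + D) / (A + B + C + D) else C / (A + C))"
    using lam_opt_eq[OF assms(1,2,4,3,5,6)] by (simp add: A_def B_def C_def D_def)
  have "lam_opt Vd t R Vc beta \<in> {0..1} \<and>
        (\<forall>lam. split_delay A B C D (lam_opt Vd t R Vc beta) \<le> split_delay A B C D lam)"
    using split_delay_min_balanced[OF pos] split_delay_min_channel_bound[OF pos \<open>B \<le> C\<close>]
    by (simp add: opt not_le)
  then show ?thesis by (simp add: delay_eq_split_delay A_def B_def C_def D_def)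
qed

end
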